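(* Let $\mathbb{H}_1,\mathbb{H}_2$ be Hilbert spaces (both real or both complex). Let $T\in \mathbb{L}(\mathbb{H}_1,\mathbb{H}_2)$ with $\|T\|=1$ be such that $M_T=S_{H_0}$, where $H_0$ is a finite-dimensional subspace of $\mathbb{H}_1$ with $\dim(H_0)=n$, and $\|T|_{H_0^\perp}\|<1$. Then $T$ is $n^2$-smooth if $\mathbb{H}_1,\mathbb{H}_2$ are complex, and $T$ is $\binom{n+1}{2}$-smooth if $\mathbb{H}_1,\mathbb{H}_2$ are real.
   Context: $\mathbb{L}(\mathbb{X},\mathbb{Y})$ denotes the space of bounded linear operators between Banach spaces with the operator norm. $S_{\mathbb{X}}$ is the unit sphere of $\mathbb{X}$. For $T\in\mathbb{L}(\mathbb{X},\mathbb{Y})$, the norm attainment set is $M_T=\{x\in S_{\mathbb{X}}:\|Tx\|=\|T\|\}$. For a Banach space $\mathbb{Z}$ and $z\in S_{\mathbb{Z}}$, let $J(z)=\{f\in \mathbb{Z}^*:\|f\|=1,\ f(z)=1\}$; $z$ is called $k$-smooth if $\dim \operatorname{span} J(z)=k$. An operator $T$ of norm one is $k$-smooth if it is a $k$-smooth point of the unit sphere of $\mathbb{Z}=\mathbb{L}(\mathbb{H}_1,\mathbb{H}_2)$. *)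

theory Defs
  imports "HOL-Analysis.Analysis" "HOL-Library.Function_Algebras"
begin

definition norm_attain_set :: "('a::real_normed_vector \<Rightarrow>\<^sub>L 'b::real_normed_vector) \<Rightarrow> 'a set" where
  "norm_attain_set T = {x. norm x = 1 \<and> norm (blinfun_apply T x) = norm T}"

definition restr_norm :: "('a::real_normed_vector \<Rightarrow> 'b::real_normed_vector) \<Rightarrow> 'a set \<Rightarrow> real" where
  "restr_norm T V = Sup {norm (T x) | x. x \<in> V \<and> norm x \<le> 1}"

definition supp_funcs :: "'z::real_normed_vector \<Rightarrow> ('z \<Rightarrow>\<^sub>L real) set" where
  "supp_funcs z = {f. norm f = 1 \<and> blinfun_apply f z = 1}"

definition k_smooth :: "'z::real_normed_vector \<Rightarrow> nat \<Rightarrow> bool" where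
  "k_smooth z k \<longleftrightarrow> norm z = 1 \<and>
     (\<exists>B. finite B \<and> independent B \<and> span B = span (supp_funcs z) \<and> card B = k)"

text \<open>A complex Hilbert space, presented as a real Hilbert space (inner product = real part of
  the complex inner product) with a complex scalar multiplication extending the real one,
  for which multiplication by i is orthogonal.\<close>
class complex_hilbert = real_inner + complete_space +
  fixes scaleC :: "complex \<Rightarrow> 'a \<Rightarrow> 'a"
  assumes scaleC_add_right: "scaleC a (x + y) = scaleC a x + scaleC a y"
    and scaleC_add_left: "scaleC (a + b) x = scaleC a x + scaleC b x"
    and scaleC_scaleC: "scaleC a (scaleC b x) = scaleC (a * b) x"
    and scaleC_one: "scaleC 1 x = x"
    and scaleC_of_real: "scaleC (complex_of_real r) x = r *\<^sub>R x"
    and inner_scaleC_ii: "inner (scaleC \<i> x) (scaleC \<i> y) = inner x y"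


instantiation complex :: complex_hilbert
begin
definition scaleC_complex :: "complex \<Rightarrow> complex \<Rightarrow> complex" where "scaleC_complex a x = a * x"
instance by standard (auto simp: scaleC_complex_def algebra_simps inner_complex_def scaleR_conv_of_real)
end

lemma vector_space_scaleC: "vector_space (scaleC :: complex \<Rightarrow> 'a::complex_hilbert \<Rightarrow> 'a)"
  by unfold_locales (simp_all add: scaleC_add_right scaleC_add_left scaleC_scaleC scaleC_one)

definition cinner :: "'a::complex_hilbert \<Rightarrow> 'a \<Rightarrow> complex" where
  "cinner x y = Complex (inner x y) (inner x (scaleC \<i> y))"

definition corth_comp :: "'a::complex_hilbert set \<Rightarrow> 'a set" where
  "corth_comp W = {x. \<forall>y\<in>W. cinner y x = 0}"

definition clinear_op :: "('a::complex_hilbert \<Rightarrow>\<^sub>L 'b::complex_hilbert) \<Rightarrow> bool" where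
  "clinear_op A \<longleftrightarrow> (\<forall>c x. blinfun_apply A (scaleC c x) = scaleC c (blinfun_apply A x))"

text \<open>The complex Banach space L(H1,H2) is represented as the set of complex-linear blinfuns.\<close>
definition cscaleL :: "complex \<Rightarrow> ('a::complex_hilbert \<Rightarrow>\<^sub>L 'b::complex_hilbert) \<Rightarrow> ('a \<Rightarrow>\<^sub>L 'b)" where
  "cscaleL c A = Blinfun (\<lambda>x. scaleC c (blinfun_apply A x))"

text \<open>Bounded complex-linear functionals on L(H1,H2), extended by 0 outside of it.\<close>
definition cdual :: "(('a::complex_hilbert \<Rightarrow>\<^sub>L 'b::complex_hilbert) \<Rightarrow> complex) set" where
  "cdual = {f. (\<forall>A B. clinear_op A \<longrightarrow> clinear_op B \<longrightarrow> f (A + B) = f A + f B)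
      \<and> (\<forall>c A. clinear_op A \<longrightarrow> f (cscaleL c A) = c * f A)
      \<and> (\<exists>K. \<forall>A. clinear_op A \<longrightarrow> cmod (f A) \<le> K * norm A)
      \<and> (\<forall>A. \<not> clinear_op A \<longrightarrow> f A = 0)}"

definition cdual_norm :: "(('a::complex_hilbert \<Rightarrow>\<^sub>L 'b::complex_hilbert) \<Rightarrow> complex) \<Rightarrow> real" where
  "cdual_norm f = Sup {cmod (f A) | A. clinear_op A \<and> norm A \<le> 1}"

definition csupp_funcs :: "('a::complex_hilbert \<Rightarrow>\<^sub>L 'b::complex_hilbert) \<Rightarrow> (('a \<Rightarrow>\<^sub>L 'b) \<Rightarrow> complex) set" where
  "csupp_funcs T = {f \<in> cdual. cdual_norm f = 1 \<and> f T = 1}"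

definition fscale :: "complex \<Rightarrow> ('z \<Rightarrow> complex) \<Rightarrow> ('z \<Rightarrow> complex)" where
  "fscale c f = (\<lambda>A. c * f A)"

definition ck_smooth :: "('a::complex_hilbert \<Rightarrow>\<^sub>L 'b::complex_hilbert) \<Rightarrow> nat \<Rightarrow> bool" where
  "ck_smooth T k \<longleftrightarrow> clinear_op T \<and> norm T = 1 \<and>
     (\<exists>B. finite B \<and> \<not> module.dependent fscale B \<and>
          module.span fscale B = module.span fscale (csupp_funcs T) \<and> card B = k)"

end

theory Submission
  imports Defs
begin

text \<open>
  Since every unit vector of \<open>H\<^sub>0\<close> attains the norm, \<open>T\<close> is isometric on \<open>H\<^sub>0\<close>; it
  contracts \<open>H\<^sub>0\<^sup>\<bottom>\<close> by a factor \<open>c < 1\<close> and maps \<open>H\<^sub>0\<close> orthogonally to \<open>T(H\<^sub>0\<^sup>\<bottom>)\<close>.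
  Hence, if \<open>Re\<langle>Th, Yh\<rangle> = 0\<close> for all \<open>h \<in> H\<^sub>0\<close>, then \<open>\<parallel>T + tY\<parallel> \<le> 1 + O(t\<^sup>2)\<close>:
  writing \<open>x = h + k\<close> with \<open>h \<in> H\<^sub>0\<close>, \<open>k \<in> H\<^sub>0\<^sup>\<bottom>\<close>, the first-order term of
  \<open>\<parallel>(T + tY)x\<parallel>\<^sup>2\<close> is \<open>O(t\<parallel>k\<parallel>\<parallel>x\<parallel>)\<close> and is absorbed by the gap \<open>(1 - c\<^sup>2)\<parallel>k\<parallel>\<^sup>2\<close>.
  So every support functional of \<open>T\<close> vanishes on such directions \<open>Y\<close>.

  For an orthonormal basis \<open>e\<^sub>1, \<dots>, e\<^sub>n\<close> of \<open>H\<^sub>0\<close> these \<open>Y\<close> form the common kernel of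
  the functionals \<open>A \<mapsto> \<langle>Te\<^sub>i, Ae\<^sub>j\<rangle> + \<langle>Te\<^sub>j, Ae\<^sub>i\<rangle>\<close> for \<open>i \<le> j\<close> (real case), resp.
  \<open>A \<mapsto> \<langle>Ae\<^sub>j, Te\<^sub>i\<rangle>\<close> (complex case). Rank-one operators form a biorthogonal family to
  them, so they are independent and every support functional is a combination of them.
  Conversely, \<open>A \<mapsto> \<langle>Au, Tu\<rangle>\<close> is a support functional for each unit vector
  \<open>u \<in> H\<^sub>0\<close>, so by polarization all these functionals lie in \<open>span J(T)\<close>. There are
  \<open>(n + 1) choose 2\<close>, resp. \<open>n\<^sup>2\<close>, of them.
\<close>

section \<open>Norm growth along directions tangent to the norm attainment set\<close>

lemma linear_le_quadratic_imp_zero: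
  fixes a D :: real
  assumes "\<And>t. t * a \<le> D * t\<^sup>2"
  shows "a = 0"
proof (rule ccontr)
  assume "a \<noteq> 0"
  define K where "K = \<bar>D\<bar> + 1"
  have "K > 0" "a\<^sup>2 > 0" using \<open>a \<noteq> 0\<close> by (auto simp: K_def)
  have "(a / K) * a \<le> D * (a / K)\<^sup>2" by (rule assms)
  also have "\<dots> \<le> \<bar>D\<bar> * (a / K)\<^sup>2" by (intro mult_right_mono) auto
  finally have "a\<^sup>2 * K \<le> a\<^sup>2 * \<bar>D\<bar>"
    using \<open>K > 0\<close> by (simp add: field_simps power2_eq_square)
  with \<open>a\<^sup>2 > 0\<close> have "K \<le> \<bar>D\<bar>" by simp
  then show False by (simp add: K_def)
qed

lemma supp_funcs_vanish_if_quadratic_bound: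
  fixes z y :: "'z::real_normed_vector"
  assumes f: "f \<in> supp_funcs z" and bound: "\<And>t. norm (z + t *\<^sub>R y) \<le> 1 + D * t\<^sup>2"
  shows "f y = 0"
proof (rule linear_le_quadratic_imp_zero)
  fix t
  have "1 + t * f y = f (z + t *\<^sub>R y)"
    using f by (simp add: supp_funcs_def blinfun.add_right blinfun.scaleR_right)
  also have "\<dots> \<le> norm f * norm (z + t *\<^sub>R y)"
    by (metis abs_ge_self order_trans real_norm_def norm_blinfun)
  also have "\<dots> \<le> 1 + D * t\<^sup>2" using f bound by (simp add: supp_funcs_def)
  finally show "t * f y \<le> D * t\<^sup>2" by simp
qed

lemma norm_preserved_imp_orthogonal_images:
  fixes T :: "'a::real_inner \<Rightarrow>\<^sub>L 'b::real_inner"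
  assumes "norm T \<le> 1" and Th: "norm (T h) = norm h" and "h \<bullet> k = 0"
  shows "T h \<bullet> T k = 0"
proof -
  have "t * (2 * (T h \<bullet> T k)) \<le> (k \<bullet> k) * t\<^sup>2" for t
  proof -
    have "norm (T (h + t *\<^sub>R k)) \<le> norm (h + t *\<^sub>R k)"
      using norm_blinfun[of T] assms(1) by (meson mult_left_le_one_le norm_ge_zero order_trans)
    then have "(T h + t *\<^sub>R T k) \<bullet> (T h + t *\<^sub>R T k) \<le> (h + t *\<^sub>R k) \<bullet> (h + t *\<^sub>R k)"
      by (simp add: power_mono blinfun.add_right blinfun.scaleR_right flip: power2_norm_eq_inner)
    moreover have "T h \<bullet> T h = h \<bullet> h" using Th by (metis power2_norm_eq_inner)
    moreover have "0 \<le> t\<^sup>2 * (T k \<bullet> T k)" by simp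
    ultimately show ?thesis using \<open>h \<bullet> k = 0\<close>
      by (simp add: inner_add_left inner_add_right inner_commute power2_eq_square
          algebra_simps)
  qed
  then have "2 * (T h \<bullet> T k) = 0" by (rule linear_le_quadratic_imp_zero)
  then show ?thesis by simp
qed

lemma norm_le_restr_norm:
  fixes T :: "'a::real_normed_vector \<Rightarrow>\<^sub>L 'b::real_normed_vector"
  assumes V: "subspace V" and k: "k \<in> V"
  shows "norm (T k) \<le> restr_norm (blinfun_apply T) V * norm k"
proof (cases "k = 0")
  case False
  have bdd: "bdd_above {norm (T x) | x. x \<in> V \<and> norm x \<le> 1}"
    by (rule bdd_aboveI[of _ "norm T"]) (auto intro: order_trans[OF norm_blinfun mult_left_le])
  have "norm (T (k /\<^sub>R norm k)) \<le> restr_norm (blinfun_apply T) V"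
    unfolding restr_norm_def using False V k
    by (intro cSup_upper[OF _ bdd]) (auto intro!: exI[of _ "k /\<^sub>R norm k"] subspace_scale)
  then show ?thesis
    using False by (simp add: blinfun.scaleR_right field_simps)
qed simp

lemma norm_preserving_if_norm_attain_set_sphere:
  fixes T :: "'a::real_normed_vector \<Rightarrow>\<^sub>L 'b::real_normed_vector"
  assumes "norm T = 1" and attain: "norm_attain_set T = {x \<in> H. norm x = 1}"
    and "subspace H" and "h \<in> H"
  shows "norm (T h) = norm h"
proof (cases "h = 0")
  case False
  have "h /\<^sub>R norm h \<in> norm_attain_set T"
    using False assms(3,4) unfolding attain by (simp add: subspace_scale)
  then have "norm (T (h /\<^sub>R norm h)) = 1"
    using \<open>norm T = 1\<close> by (simp add: norm_attain_set_def)
  then show ?thesis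
    using False by (simp add: blinfun.scaleR_right field_simps)
qed simp

lemma inner_preserving_if_norm_preserving:
  fixes T :: "'a::real_inner \<Rightarrow>\<^sub>L 'b::real_inner"
  assumes "subspace H" and iso: "\<And>h. h \<in> H \<Longrightarrow> norm (T h) = norm h"
    and "u \<in> H" "v \<in> H"
  shows "T u \<bullet> T v = u \<bullet> v"
proof -
  have "u + v \<in> H" using assms by (simp add: subspace_add)
  then have "(norm (T (u + v)))\<^sup>2 = (norm (u + v))\<^sup>2" "(norm (T u))\<^sup>2 = (norm u)\<^sup>2"
    "(norm (T v))\<^sup>2 = (norm v)\<^sup>2"
    using iso assms by auto
  then show ?thesis
    by (simp add: power2_norm_eq_inner blinfun.add_right inner_add_left inner_add_right
        inner_commute)
qed

lemma span_orthogonal_decomposition: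
  fixes B :: "'a::real_inner set"
  assumes "finite B"
  obtains h k where "x = h + k" "h \<in> span B" "k \<in> orthogonal_comp (span B)"
proof -
  obtain C where "finite C" "span C = span B" and orthC: "pairwise orthogonal C"
    using basis_orthogonal[OF assms] by blast
  define h where "h = (\<Sum>b\<in>C. (b \<bullet> x / (b \<bullet> b)) *\<^sub>R b)"
  have "orthogonal (x - h) b" if "b \<in> C" for b
  proof -
    have "h \<bullet> b = (\<Sum>c\<in>C. if c = b then x \<bullet> b else 0)"
      unfolding h_def inner_sum_left using orthC that
      by (intro sum.cong) (auto simp: pairwise_def orthogonal_def inner_commute)
    then show ?thesis
      using \<open>finite C\<close> that by (simp add: orthogonal_def inner_diff_left)
  qed
  then have "x - h \<in> orthogonal_comp (span C)"
    unfolding orthogonal_comp_def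
    by (auto intro: orthogonal_to_span[THEN orthogonal_commute[THEN iffD1]]
        simp: orthogonal_commute)
  moreover have "h \<in> span C"
    unfolding h_def by (intro span_sum span_scale span_base)
  ultimately show ?thesis
    using that[of h "x - h"] \<open>span C = span B\<close> by simp
qed

text \<open>
  The scalar core of the perturbation estimate: \<open>a\<close>, \<open>b\<close> are the lengths of the components
  of \<open>x\<close> in \<open>H\<^sub>0\<close> and \<open>H\<^sub>0\<^sup>\<bottom>\<close>, and \<open>P\<close>, \<open>Q\<close>, \<open>R\<close> stand for \<open>\<parallel>Tx\<parallel>\<^sup>2\<close>, \<open>\<langle>Tx, Yx\<rangle>\<close>,
  \<open>\<parallel>Yx\<parallel>\<close>, with \<open>M = \<parallel>Y\<parallel>\<close>.
\<close>

lemma perturbed_square_le: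
  fixes a b x c M t P Q R :: real
  assumes pyth: "x\<^sup>2 = a\<^sup>2 + b\<^sup>2" and "0 \<le> b" "0 \<le> x" "0 \<le> M" "0 \<le> R"
    and c: "0 \<le> c" "c < 1"
    and P: "P \<le> a\<^sup>2 + c\<^sup>2 * b\<^sup>2" and Q: "\<bar>Q\<bar> \<le> 2 * M * b * x" and R: "R \<le> M * x"
  shows "P + 2 * t * Q + t\<^sup>2 * R\<^sup>2 \<le> ((1 + M\<^sup>2 * (1 + 4 / (1 - c\<^sup>2)) * t\<^sup>2) * x)\<^sup>2"
proof -
  define \<eta> where "\<eta> = 1 - c\<^sup>2"
  have "\<eta> > 0" using c by (simp add: \<eta>_def abs_square_less_1)
  have am_gm: "4 * s * M * b * x \<le> \<eta> * b\<^sup>2 + 4 * s\<^sup>2 * M\<^sup>2 * x\<^sup>2 / \<eta>" for s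
  proof -
    have "0 \<le> (\<eta> * b - 2 * s * M * x)\<^sup>2 / \<eta>" using \<open>\<eta> > 0\<close> by simp
    then show ?thesis using \<open>\<eta> > 0\<close> by (simp add: power2_eq_square field_simps)
  qed
  have "t * Q \<le> \<bar>t\<bar> * \<bar>Q\<bar>" by (simp flip: abs_mult)
  also have "\<dots> \<le> \<bar>t\<bar> * (2 * M * b * x)" using Q by (simp add: mult_left_mono)
  finally have "t * Q \<le> \<bar>t\<bar> * (2 * M * b * x)" .
  moreover have "t\<^sup>2 * R\<^sup>2 \<le> t\<^sup>2 * (M * x)\<^sup>2"
    using R \<open>0 \<le> R\<close> by (intro mult_left_mono power_mono) auto
  ultimately have "P + 2 * t * Q + t\<^sup>2 * R\<^sup>2
      \<le> a\<^sup>2 + c\<^sup>2 * b\<^sup>2 + 4 * \<bar>t\<bar> * M * b * x + t\<^sup>2 * (M * x)\<^sup>2"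
    using P by linarith
  also have "\<dots> \<le> (1 + M\<^sup>2 * (1 + 4 / \<eta>) * t\<^sup>2) * x\<^sup>2"
    using am_gm[of "\<bar>t\<bar>"] pyth
    by (simp add: \<eta>_def algebra_simps power_mult_distrib add_divide_distrib)
  also have "\<dots> \<le> ((1 + M\<^sup>2 * (1 + 4 / \<eta>) * t\<^sup>2) * x)\<^sup>2"
  proof -
    have "s \<le> s\<^sup>2" if "s \<ge> 1" for s :: real
      using that by (simp add: power2_eq_square)
    moreover have "1 + M\<^sup>2 * (1 + 4 / \<eta>) * t\<^sup>2 \<ge> 1" using \<open>\<eta> > 0\<close> by simp
    ultimately show ?thesis by (simp add: power_mult_distrib mult_right_mono)
  qed
  finally show ?thesis by (simp add: \<eta>_def)
qed

lemma norm_perturbation_pointwise: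
  fixes T Y :: "'a::real_inner \<Rightarrow>\<^sub>L 'b::real_inner"
  assumes Th: "norm (T h) = norm h" and hk: "h \<bullet> k = 0" and ThTk: "T h \<bullet> T k = 0"
    and Tk: "norm (T k) \<le> c * norm k" and c: "0 \<le> c" "c < 1"
    and ThYh: "T h \<bullet> Y h = 0"
  shows "norm ((T + t *\<^sub>R Y) (h + k))
    \<le> (1 + (norm Y)\<^sup>2 * (1 + 4 / (1 - c\<^sup>2)) * t\<^sup>2) * norm (h + k)"
proof -
  define x where "x = h + k"
  have pyth: "(norm x)\<^sup>2 = (norm h)\<^sup>2 + (norm k)\<^sup>2"
    using norm_add_Pythagorean[of h k] hk by (simp add: x_def orthogonal_def)
  have "norm h \<le> norm x"
    by (rule power2_le_imp_le) (use pyth in simp_all)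
  have "norm (T k) \<le> norm k" using Tk c mult_left_le_one_le[of "norm k" c] by simp
  have Tx: "(norm (T x))\<^sup>2 \<le> (norm h)\<^sup>2 + c\<^sup>2 * (norm k)\<^sup>2"
  proof -
    have "(norm (T x))\<^sup>2 = (norm (T h))\<^sup>2 + (norm (T k))\<^sup>2"
      using norm_add_Pythagorean[of "T h" "T k"] ThTk
      by (simp add: x_def orthogonal_def blinfun.add_right)
    moreover have "(norm (T k))\<^sup>2 \<le> (c * norm k)\<^sup>2" using Tk by (simp add: power_mono)
    ultimately show ?thesis using Th by (simp add: power_mult_distrib)
  qed
  have cross: "\<bar>T x \<bullet> Y x\<bar> \<le> 2 * norm Y * norm k * norm x"
  proof -
    have "T x \<bullet> Y x = T h \<bullet> Y k + T k \<bullet> Y x"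
      using ThYh by (simp add: x_def blinfun.add_right inner_add_left inner_add_right)
    moreover have "\<bar>T h \<bullet> Y k\<bar> \<le> norm x * (norm Y * norm k)"
      using Th \<open>norm h \<le> norm x\<close> norm_blinfun[of Y k]
      by (intro order_trans[OF Cauchy_Schwarz_ineq2] mult_mono) auto
    moreover have "\<bar>T k \<bullet> Y x\<bar> \<le> norm k * (norm Y * norm x)"
      using \<open>norm (T k) \<le> norm k\<close> norm_blinfun[of Y x]
      by (intro order_trans[OF Cauchy_Schwarz_ineq2] mult_mono) auto
    ultimately show ?thesis by (simp add: algebra_simps)
  qed
  have "(norm ((T + t *\<^sub>R Y) x))\<^sup>2 = (norm (T x))\<^sup>2 + 2 * t * (T x \<bullet> Y x) + t\<^sup>2 * (norm (Y x))\<^sup>2"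
    unfolding blinfun.add_left blinfun.scaleR_left power2_norm_eq_inner
    by (simp add: inner_add_left inner_add_right inner_commute power2_eq_square algebra_simps)
  also have "\<dots> \<le> ((1 + (norm Y)\<^sup>2 * (1 + 4 / (1 - c\<^sup>2)) * t\<^sup>2) * norm x)\<^sup>2"
    by (rule perturbed_square_le[OF pyth _ _ _ _ c Tx cross norm_blinfun[of Y x]]) simp_all
  finally have sq: "(norm ((T + t *\<^sub>R Y) x))\<^sup>2
      \<le> ((1 + (norm Y)\<^sup>2 * (1 + 4 / (1 - c\<^sup>2)) * t\<^sup>2) * norm x)\<^sup>2" .
  have "c\<^sup>2 < 1" using c by (simp add: abs_square_less_1)
  show ?thesis
    unfolding x_def[symmetric] using sq by (rule power2_le_imp_le) (use \<open>c\<^sup>2 < 1\<close> in simp)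
qed

lemma norm_perturbation_le_quadratic:
  fixes T Y :: "'a::real_inner \<Rightarrow>\<^sub>L 'b::real_inner"
  assumes "finite B" and "norm T = 1"
    and attain: "norm_attain_set T = {x \<in> span B. norm x = 1}"
    and restr: "restr_norm (blinfun_apply T) (orthogonal_comp (span B)) < 1"
    and ThYh: "\<And>h. h \<in> span B \<Longrightarrow> T h \<bullet> Y h = 0"
  obtains D where "\<And>t. norm (T + t *\<^sub>R Y) \<le> 1 + D * t\<^sup>2"
proof -
  define r where "r = restr_norm (blinfun_apply T) (orthogonal_comp (span B))"
  define c where "c = max 0 r"
  have "0 \<le> c" "c < 1" using restr by (auto simp: c_def r_def)
  define D where "D = (norm Y)\<^sup>2 * (1 + 4 / (1 - c\<^sup>2))"
  have "c\<^sup>2 < 1" using \<open>0 \<le> c\<close> \<open>c < 1\<close> by (simp add: abs_square_less_1)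
  then have "D \<ge> 0" by (simp add: D_def)
  have pointwise: "norm ((T + t *\<^sub>R Y) x) \<le> (1 + D * t\<^sup>2) * norm x" for t x
  proof -
    obtain h k where x: "x = h + k" and h: "h \<in> span B" and k: "k \<in> orthogonal_comp (span B)"
      using span_orthogonal_decomposition[OF \<open>finite B\<close>] .
    have Th: "norm (T h) = norm h"
      using \<open>norm T = 1\<close> attain subspace_span h by (rule norm_preserving_if_norm_attain_set_sphere)
    have hk: "h \<bullet> k = 0"
      using h k by (simp add: orthogonal_comp_def orthogonal_def)
    have "norm (T k) \<le> r * norm k"
      unfolding r_def using subspace_orthogonal_comp k by (rule norm_le_restr_norm)
    also have "\<dots> \<le> c * norm k" by (simp add: c_def mult_right_mono)
    finally have Tk: "norm (T k) \<le> c * norm k" .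
    have "T h \<bullet> T k = 0"
      using \<open>norm T = 1\<close> Th hk by (intro norm_preserved_imp_orthogonal_images) auto
    from norm_perturbation_pointwise[OF Th hk this Tk \<open>0 \<le> c\<close> \<open>c < 1\<close> ThYh[OF h]]
    show ?thesis unfolding x D_def .
  qed
  show thesis
  proof (rule that)
    show "norm (T + t *\<^sub>R Y) \<le> 1 + D * t\<^sup>2" for t
      by (rule norm_blinfun_bound) (use \<open>D \<ge> 0\<close> pointwise in auto)
  qed
qed

section \<open>Biorthogonal families and orthonormal bases\<close>

lemma (in vector_space) biorthogonal_imp_independent:
  assumes "finite I"
    and lin: "\<And>p. p \<in> I \<Longrightarrow> Vector_Spaces.linear scale (*) (ev p)"
    and biorth: "\<And>p q. p \<in> I \<Longrightarrow> q \<in> I \<Longrightarrow> ev p (v q) = (if p = q then 1 else 0)"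
  shows "inj_on v I" and "independent (v ` I)"
proof -
  show inj: "inj_on v I"
  proof (rule inj_onI)
    fix p q assume "p \<in> I" "q \<in> I" "v p = v q"
    then show "p = q" using biorth[of p p] biorth[of p q] by (auto split: if_splits)
  qed
  show "independent (v ` I)"
  proof
    assume "dependent (v ` I)"
    then obtain u q where "q \<in> I" "u (v q) \<noteq> 0" and comb: "(\<Sum>p\<in>I. scale (u (v p)) (v p)) = 0"
      using dependent_finite[of "v ` I"] \<open>finite I\<close> by (auto simp: sum.reindex[OF inj])
    have hom: "module_hom scale (*) (ev q)"
      using lin[OF \<open>q \<in> I\<close>] by (simp add: module_hom_iff_linear)
    have "0 = ev q (\<Sum>p\<in>I. scale (u (v p)) (v p))"
      using module_hom.zero[OF hom] by (simp add: comb)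
    also have "\<dots> = (\<Sum>p\<in>I. u (v p) * ev q (v p))"
      by (simp add: module_hom.sum[OF hom] module_hom.scale[OF hom])
    also have "\<dots> = (\<Sum>p\<in>I. if p = q then u (v p) else 0)"
      using biorth[OF \<open>q \<in> I\<close>] by (intro sum.cong) auto
    also have "\<dots> = u (v q)"
      using \<open>finite I\<close> \<open>q \<in> I\<close> by simp
    finally show False using \<open>u (v q) \<noteq> 0\<close> by simp
  qed
qed

lemma orthogonal_basis_of_independent:
  fixes B :: "'a::real_inner set"
  assumes "finite B" and "independent B"
  obtains C where "finite C" "0 \<notin> C" "pairwise orthogonal C" "span C = span B" "card C = card B"
proof -
  obtain C where "finite C" "span C = span B" and orthC: "pairwise orthogonal C"
    using basis_orthogonal[OF \<open>finite B\<close>] by blast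
  have "pairwise orthogonal (C - {0})" using orthC by (rule pairwise_subset) blast
  moreover have "independent (C - {0})"
    by (rule pairwise_orthogonal_independent[OF pairwise_subset[OF orthC]]) auto
  moreover have "span (C - {0}) = span B" using \<open>span C = span B\<close> by simp
  moreover have "card (C - {0}) = card B"
    using real_vector.dim_eq_card_independent[OF \<open>independent B\<close>]
      real_vector.dim_eq_card[OF \<open>span (C - {0}) = span B\<close> \<open>independent (C - {0})\<close>]
    by simp
  ultimately show thesis
    using \<open>finite C\<close> by (intro that[of "C - {0}"]) auto
qed

lemma orthonormal_basis_of_independent:
  fixes B :: "'a::real_inner set"
  assumes "finite B" and "independent B"
  obtains e where "\<And>i j. i < card B \<Longrightarrow> j < card B \<Longrightarrow> e i \<bullet> e j = (if i = j then 1 else 0)"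
    and "span (e ` {..<card B}) = span B"
proof -
  obtain C where "finite C" "0 \<notin> C" and orthC: "pairwise orthogonal C"
    and spanC: "span C = span B" and "card C = card B"
    using orthogonal_basis_of_independent[OF assms] .
  then obtain c where "bij_betw c {..<card B} C"
    using bij_betw_from_nat_into_finite[OF \<open>finite C\<close>] by metis
  then have c_img: "c ` {..<card B} = C" and c_inj: "inj_on c {..<card B}"
    by (simp_all add: bij_betw_def)
  define e where "e i = c i /\<^sub>R norm (c i)" for i
  show thesis
  proof (rule that)
    fix i j assume ij: "i < card B" "j < card B"
    then have "c i \<in> C" "c j \<in> C" using c_img by auto
    show "e i \<bullet> e j = (if i = j then 1 else 0)"
    proof (cases "i = j")
      case True
      have "c i \<noteq> 0" using \<open>c i \<in> C\<close> \<open>0 \<notin> C\<close> by auto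
      with True show ?thesis by (simp add: e_def dot_square_norm power2_eq_square)
    next
      case False
      then have "c i \<bullet> c j = 0"
        using \<open>c i \<in> C\<close> \<open>c j \<in> C\<close> ij inj_on_eq_iff[OF c_inj] orthC
        by (auto simp: pairwise_def orthogonal_def)
      with False show ?thesis by (simp add: e_def)
    qed
  next
    have "C \<subseteq> span (e ` {..<card B})"
    proof
      fix x assume "x \<in> C"
      then obtain i where "i < card B" "x = c i" using c_img by auto
      moreover have "c i = norm (c i) *\<^sub>R e i"
        by (cases "c i = 0") (simp_all add: e_def)
      ultimately show "x \<in> span (e ` {..<card B})"
        by (metis span_scale span_base image_eqI lessThan_iff)
    qed
    moreover have "e ` {..<card B} \<subseteq> span C"
      using c_img by (auto simp: e_def intro!: span_scale[OF span_base])
    ultimately show "span (e ` {..<card B}) = span B"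
      using spanC span_eq by blast
  qed
qed

section \<open>Smoothness in the real case\<close>

lemma card_ordered_pairs_below: "card {(i, j). i \<le> j \<and> j < (n::nat)} = (n + 1) choose 2"
proof (induction n)
  case (Suc n)
  have split: "{(i, j). i \<le> j \<and> j < Suc n} = {(i, j). i \<le> j \<and> j < n} \<union> (\<lambda>i. (i, n)) ` {..n}"
    by auto
  have "finite {(i, j). i \<le> j \<and> (j::nat) < n}"
    by (rule finite_subset[of _ "{..<n} \<times> {..<n}"]) auto
  then have "card {(i, j). i \<le> j \<and> j < Suc n}
      = card {(i, j). i \<le> j \<and> j < n} + card ((\<lambda>i. (i, n)) ` {..n})"
    unfolding split by (intro card_Un_disjoint) auto
  also have "card ((\<lambda>i. (i, n)) ` {..n}) = Suc n"
    by (simp add: card_image inj_on_def)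
  finally show ?case using Suc.IH by (simp add: numeral_2_eq_2)
qed simp

definition inner_eval :: "'b::real_inner \<Rightarrow> 'a::real_normed_vector \<Rightarrow> ('a \<Rightarrow>\<^sub>L 'b) \<Rightarrow>\<^sub>L real"
  where "inner_eval w v = Blinfun (\<lambda>A. w \<bullet> blinfun_apply A v)"

lemma inner_eval_apply [simp]: "inner_eval w v A = w \<bullet> A v"
  unfolding inner_eval_def
  by (simp add: bounded_linear_Blinfun_apply
      bounded_linear_compose[OF bounded_linear_inner_right blinfun.bounded_linear_left])

definition rank_one :: "'b::real_normed_vector \<Rightarrow> 'a::real_inner \<Rightarrow> 'a \<Rightarrow>\<^sub>L 'b"
  where "rank_one w v = Blinfun (\<lambda>z. (z \<bullet> v) *\<^sub>R w)"

lemma rank_one_apply [simp]: "rank_one w v z = (z \<bullet> v) *\<^sub>R w"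
  unfolding rank_one_def
  by (simp add: bounded_linear_Blinfun_apply
      bounded_linear_compose[OF bounded_linear_scaleR_left bounded_linear_inner_left])

lemma inner_eval_in_span_supp_funcs:
  fixes T :: "'a::real_normed_vector \<Rightarrow>\<^sub>L 'b::real_inner"
  assumes "norm T = 1" and Tu: "norm (T u) = norm u"
  shows "inner_eval (T u) u \<in> span (supp_funcs T)"
proof (cases "u = 0")
  case True
  then have "inner_eval (T u) u = 0" by (intro blinfun_eqI) simp
  then show ?thesis by (simp add: span_zero)
next
  case False
  define w where "w = u /\<^sub>R norm u"
  have "norm w = 1" "norm (T w) = 1"
    using False Tu by (simp_all add: w_def blinfun.scaleR_right)
  have "inner_eval (T w) w \<in> supp_funcs T"
  proof -
    have le: "norm (inner_eval (T w) w) \<le> 1"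
    proof (rule norm_blinfun_bound)
      show "norm (inner_eval (T w) w A) \<le> 1 * norm A" for A
        using Cauchy_Schwarz_ineq2[of "T w" "A w"] norm_blinfun[of A w]
          \<open>norm w = 1\<close> \<open>norm (T w) = 1\<close>
        by simp
    qed simp
    have val: "inner_eval (T w) w T = 1"
      using \<open>norm (T w) = 1\<close> by (simp add: dot_square_norm)
    then have "1 \<le> norm (inner_eval (T w) w)"
      using norm_blinfun[of "inner_eval (T w) w" T] \<open>norm T = 1\<close> by simp
    with le val show ?thesis by (simp add: supp_funcs_def)
  qed
  moreover have "inner_eval (T u) u = (norm u)\<^sup>2 *\<^sub>R inner_eval (T w) w"
    using False
    by (intro blinfun_eqI)
      (simp add: w_def blinfun.scaleR_left blinfun.scaleR_right field_simps power2_eq_square)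
  ultimately show ?thesis by (simp add: span_base span_scale)
qed

definition sym_inner_eval ::
    "('a::real_normed_vector \<Rightarrow>\<^sub>L 'b::real_inner) \<Rightarrow> 'a \<Rightarrow> 'a \<Rightarrow> ('a \<Rightarrow>\<^sub>L 'b) \<Rightarrow>\<^sub>L real"
  where "sym_inner_eval T u v = inner_eval (T u) v + inner_eval (T v) u"

lemma sym_inner_eval_apply [simp]: "sym_inner_eval T u v A = T u \<bullet> A v + T v \<bullet> A u"
  by (simp add: sym_inner_eval_def blinfun.add_left)

lemma sym_inner_eval_polarization:
  "sym_inner_eval T u v
    = (1 / 2) *\<^sub>R (inner_eval (T (u + v)) (u + v) - inner_eval (T (u - v)) (u - v))"
  by (rule blinfun_eqI)
    (simp add: blinfun.scaleR_left blinfun.diff_left blinfun.add_right blinfun.diff_right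
      inner_add_left inner_add_right inner_diff_left inner_diff_right algebra_simps)

context
  fixes T :: "'a::real_inner \<Rightarrow>\<^sub>L 'b::real_inner" and e :: "nat \<Rightarrow> 'a" and n :: nat
  assumes norm_T: "norm T = 1"
    and orthonormal: "\<And>i j. i < n \<Longrightarrow> j < n \<Longrightarrow> e i \<bullet> e j = (if i = j then 1 else 0)"
    and attain: "norm_attain_set T = {x \<in> span (e ` {..<n}). norm x = 1}"
    and restr: "restr_norm (blinfun_apply T) (orthogonal_comp (span (e ` {..<n}))) < 1"
begin

abbreviation index_pairs :: "(nat \<times> nat) set"
  where "index_pairs \<equiv> {(i, j). i \<le> j \<and> j < n}"

abbreviation sym_functional :: "nat \<times> nat \<Rightarrow> ('a \<Rightarrow>\<^sub>L 'b) \<Rightarrow>\<^sub>L real"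
  where "sym_functional p \<equiv> sym_inner_eval T (e (fst p)) (e (snd p))"

text \<open>The factor \<open>1 / 2\<close> on the diagonal makes this family biorthogonal to \<open>sym_functional\<close>.\<close>

abbreviation dual_rank_one :: "nat \<times> nat \<Rightarrow> 'a \<Rightarrow>\<^sub>L 'b"
  where "dual_rank_one p \<equiv>
    (if fst p = snd p then 1 / 2 else 1) *\<^sub>R rank_one (T (e (fst p))) (e (snd p))"

lemma norm_preserving_on_span_basis:
  "h \<in> span (e ` {..<n}) \<Longrightarrow> norm (T h) = norm h"
  using norm_T attain subspace_span by (rule norm_preserving_if_norm_attain_set_sphere)

lemma image_basis_orthonormal:
  assumes "i < n" "j < n"
  shows "T (e i) \<bullet> T (e j) = (if i = j then 1 else 0)"
  using inner_preserving_if_norm_preserving[OF subspace_span norm_preserving_on_span_basis]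
    orthonormal assms by (simp add: span_base)

lemma sym_functional_biorthogonal:
  assumes "p \<in> index_pairs" "q \<in> index_pairs"
  shows "sym_functional q (dual_rank_one p) = (if p = q then 1 else 0)"
  using assms
  by (auto simp: blinfun.scaleR_left orthonormal image_basis_orthonormal split: prod.splits)

lemma sym_functional_in_span_supp_funcs:
  assumes "p \<in> index_pairs"
  shows "sym_functional p \<in> span (supp_funcs T)"
proof -
  have psi: "inner_eval (T x) x \<in> span (supp_funcs T)" if "x \<in> span (e ` {..<n})" for x
    using norm_T norm_preserving_on_span_basis[OF that] by (rule inner_eval_in_span_supp_funcs)
  have "e (fst p) \<in> span (e ` {..<n})" "e (snd p) \<in> span (e ` {..<n})"
    using assms by (auto intro: span_base)
  then show ?thesis
    unfolding sym_inner_eval_polarization by (intro span_scale span_diff psi span_add)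
qed

lemma supp_funcs_vanish_on_common_kernel:
  assumes f: "f \<in> supp_funcs T" and Y: "\<And>q. q \<in> index_pairs \<Longrightarrow> sym_functional q Y = 0"
  shows "f Y = 0"
proof -
  have basis: "T u \<bullet> Y v + T v \<bullet> Y u = 0" if uv: "u \<in> e ` {..<n}" "v \<in> e ` {..<n}" for u v
  proof -
    obtain i j where "i < n" "j < n" "u = e i" "v = e j" using uv by auto
    then show ?thesis
      using Y[of "(i, j)"] Y[of "(j, i)"] by (cases "i \<le> j") (auto simp: add.commute)
  qed
  have bl: "bilinear (\<lambda>u v. T u \<bullet> Y v + T v \<bullet> Y u)"
    by (auto simp: bilinear_def blinfun.add_right blinfun.scaleR_right inner_add_left
        inner_add_right algebra_simps intro!: linearI)
  have bl0: "bilinear (\<lambda>u v. 0::real)"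
    by (auto simp: bilinear_def intro: linearI)
  have "T h \<bullet> Y h + T h \<bullet> Y h = 0" if h: "h \<in> span (e ` {..<n})" for h
    using bilinear_eq[OF bl bl0 subset_refl subset_refl h h basis] by simp
  then have "T h \<bullet> Y h = 0" if "h \<in> span (e ` {..<n})" for h
    using that by simp
  then obtain D where "\<And>t. norm (T + t *\<^sub>R Y) \<le> 1 + D * t\<^sup>2"
    using norm_perturbation_le_quadratic[OF finite_imageI[OF finite_lessThan] norm_T attain restr]
    by blast
  with f show ?thesis by (rule supp_funcs_vanish_if_quadratic_bound)
qed

lemma finite_index_pairs: "finite index_pairs"
  by (rule finite_subset[of _ "{..<n} \<times> {..<n}"]) auto

lemma supp_funcs_in_span_sym_functional:
  assumes f: "f \<in> supp_funcs T"
  shows "f \<in> span (sym_functional ` index_pairs)"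
proof -
  have expansion: "f A = (\<Sum>p\<in>index_pairs. f (dual_rank_one p) * sym_functional p A)" for A
  proof -
    define Y where "Y = A - (\<Sum>p\<in>index_pairs. sym_functional p A *\<^sub>R dual_rank_one p)"
    have "sym_functional q Y = 0" if "q \<in> index_pairs" for q
    proof -
      have "sym_functional q Y = sym_functional q A
          - (\<Sum>p\<in>index_pairs. sym_functional p A * sym_functional q (dual_rank_one p))"
        unfolding Y_def by (simp only: blinfun.diff_right blinfun.sum_right blinfun.scaleR_right
            real_scaleR_def)
      also have "(\<Sum>p\<in>index_pairs. sym_functional p A * sym_functional q (dual_rank_one p))
          = (\<Sum>p\<in>index_pairs. if p = q then sym_functional p A else 0)"
        by (rule sum.cong)
          (use that sym_functional_biorthogonal in \<open>auto simp del: sym_inner_eval_apply\<close>)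
      finally show ?thesis using that finite_index_pairs by simp
    qed
    then have "f Y = 0" by (rule supp_funcs_vanish_on_common_kernel[OF f])
    moreover have "f Y = f A - (\<Sum>p\<in>index_pairs. sym_functional p A * f (dual_rank_one p))"
      unfolding Y_def
      by (simp only: blinfun.diff_right blinfun.sum_right blinfun.scaleR_right real_scaleR_def)
    ultimately show ?thesis by (simp add: mult_ac)
  qed
  have "f = (\<Sum>p\<in>index_pairs. f (dual_rank_one p) *\<^sub>R sym_functional p)"
  proof (rule blinfun_eqI)
    show "f A = (\<Sum>p\<in>index_pairs. f (dual_rank_one p) *\<^sub>R sym_functional p) A" for A
      using expansion[of A] by (simp add: blinfun.sum_left blinfun.scaleR_left)
  qed
  also have "\<dots> \<in> span (sym_functional ` index_pairs)"
    by (intro span_sum span_scale span_base imageI)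
  finally show ?thesis .
qed

lemma k_smooth_norm_attain_sphere: "k_smooth T ((n + 1) choose 2)"
proof -
  have lin: "Vector_Spaces.linear (*\<^sub>R) (*) (\<lambda>\<phi>. blinfun_apply \<phi> A)" for A :: "'a \<Rightarrow>\<^sub>L 'b"
    by (auto simp: Vector_Spaces.linear_def module_hom_iff module_iff_vector_space
        vector_space_over_itself.vector_space_axioms real_vector.vector_space_axioms
        blinfun.add_left blinfun.scaleR_left)
  have inj: "inj_on sym_functional index_pairs"
    and indep: "independent (sym_functional ` index_pairs)"
    using real_vector.biorthogonal_imp_independent[of index_pairs
        "\<lambda>p \<phi>. blinfun_apply \<phi> (dual_rank_one p)",
        OF finite_index_pairs lin sym_functional_biorthogonal]
    by blast+
  have "span (sym_functional ` index_pairs) = span (supp_funcs T)"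
    unfolding span_eq using sym_functional_in_span_supp_funcs supp_funcs_in_span_sym_functional
    by blast
  then show ?thesis
    unfolding k_smooth_def
    using norm_T finite_index_pairs indep card_image[OF inj] card_ordered_pairs_below by auto
qed

end

section \<open>Complex Hilbert spaces\<close>

interpretation cs: vector_space "scaleC :: complex \<Rightarrow> 'a \<Rightarrow> 'a::complex_hilbert"
  by (rule vector_space_scaleC)

interpretation fs: vector_space "fscale :: complex \<Rightarrow> ('z \<Rightarrow> complex) \<Rightarrow> 'z \<Rightarrow> complex"
  by unfold_locales (auto simp: fscale_def algebra_simps fun_eq_iff)

lemma fscale_apply [simp]: "fscale c f A = c * f A"
  by (simp add: fscale_def)

lemma scaleC_decomp: "scaleC c x = Re c *\<^sub>R x + Im c *\<^sub>R scaleC \<i> (x::'a::complex_hilbert)"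
proof -
  have "c = complex_of_real (Re c) + complex_of_real (Im c) * \<i>"
    by (simp add: complex_eq_iff)
  then have "scaleC c x
      = scaleC (complex_of_real (Re c)) x + scaleC (complex_of_real (Im c)) (scaleC \<i> x)"
    by (metis scaleC_add_left scaleC_scaleC)
  then show ?thesis by (simp only: scaleC_of_real)
qed

lemma scaleC_ii_ii: "scaleC \<i> (scaleC \<i> x) = - (x::'a::complex_hilbert)"
  using scaleC_of_real[of "-1" x] by (simp add: scaleC_scaleC)

lemma scaleC_scaleR: "scaleC c (r *\<^sub>R x) = r *\<^sub>R scaleC c (x::'a::complex_hilbert)"
  by (metis scaleC_of_real scaleC_scaleC mult.commute)

lemma inner_ii_left: "scaleC \<i> x \<bullet> y = - (x \<bullet> scaleC \<i> (y::'a::complex_hilbert))"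
  using inner_scaleC_ii[of "scaleC \<i> x" y] by (simp add: scaleC_ii_ii)

lemma inner_ii_self: "x \<bullet> scaleC \<i> (x::'a::complex_hilbert) = 0"
  using inner_ii_left[of x x] by (simp add: inner_commute)

lemma norm_ii: "norm (scaleC \<i> (x::'a::complex_hilbert)) = norm x"
  by (simp add: norm_eq_sqrt_inner inner_scaleC_ii)

lemma bounded_linear_scaleC: "bounded_linear (scaleC c :: 'a::complex_hilbert \<Rightarrow> 'a)"
proof -
  have "bounded_linear (scaleC \<i> :: 'a \<Rightarrow> 'a)"
    by (rule bounded_linear_intro[where K=1])
      (simp_all add: cs.scale_right_distrib scaleC_scaleR norm_ii)
  then have "bounded_linear (\<lambda>x::'a. Re c *\<^sub>R x + Im c *\<^sub>R scaleC \<i> x)"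
    by (intro bounded_linear_add bounded_linear_scaleR_right
        bounded_linear_compose[OF bounded_linear_scaleR_right])
  then show ?thesis by (simp flip: scaleC_decomp)
qed

lemma cinner_Re [simp]: "Re (cinner x y) = x \<bullet> y"
  and cinner_Im [simp]: "Im (cinner x y) = x \<bullet> scaleC \<i> y"
  by (simp_all add: cinner_def)

lemma cinner_eq_0_iff: "cinner x y = 0 \<longleftrightarrow> x \<bullet> y = 0 \<and> x \<bullet> scaleC \<i> y = 0"
  by (simp add: complex_eq_iff)

lemma
  fixes x y z :: "'a::complex_hilbert"
  shows cinner_add_left: "cinner (x + y) z = cinner x z + cinner y z"
  and cinner_add_right: "cinner z (x + y) = cinner z x + cinner z y"
  and cinner_diff_left: "cinner (x - y) z = cinner x z - cinner y z"
  and cinner_diff_right: "cinner z (x - y) = cinner z x - cinner z y"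
  and cinner_scaleR_left: "cinner (r *\<^sub>R x) z = complex_of_real r * cinner x z"
  and cinner_scaleR_right: "cinner z (r *\<^sub>R x) = complex_of_real r * cinner z x"
  and cinner_ii_left: "cinner (scaleC \<i> x) z = \<i> * cinner x z"
  and cinner_ii_right: "cinner z (scaleC \<i> x) = - \<i> * cinner z x"
  by (simp_all add: complex_eq_iff inner_add_left inner_add_right inner_diff_left inner_diff_right
      cs.scale_right_distrib cs.scale_right_diff_distrib scaleC_scaleR inner_ii_left scaleC_ii_ii)

lemma
  fixes x z :: "'a::complex_hilbert"
  shows cinner_scaleC_left: "cinner (scaleC c x) z = c * cinner x z"
  and cinner_scaleC_right: "cinner z (scaleC c x) = cnj c * cinner z x"
  by (simp_all only: scaleC_decomp[of c x] cinner_add_left cinner_add_right cinner_scaleR_left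
      cinner_scaleR_right cinner_ii_left cinner_ii_right)
    (simp_all add: complex_eq_iff algebra_simps)

lemma cinner_commute: "cinner y x = cnj (cinner x (y::'a::complex_hilbert))"
  using inner_ii_left[of x y] by (simp add: complex_eq_iff inner_commute[of y])

lemma cinner_self: "cinner x x = complex_of_real ((norm (x::'a::complex_hilbert))\<^sup>2)"
  by (simp add: complex_eq_iff inner_ii_self dot_square_norm)

lemma cinner_zero_left [simp]: "cinner 0 (x::'a::complex_hilbert) = 0"
  and cinner_zero_right [simp]: "cinner x (0::'a) = 0"
  by (simp_all add: cinner_def complex_eq_iff)

lemma norm_scaleC: "norm (scaleC c x) = cmod c * norm (x::'a::complex_hilbert)"
proof (rule power2_eq_imp_eq)
  have "(norm (scaleC c x))\<^sup>2 = ((Re c)\<^sup>2 + (Im c)\<^sup>2) * (norm x)\<^sup>2"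
    unfolding scaleC_decomp[of c x] power2_norm_eq_inner
    by (simp add: inner_add_left inner_add_right inner_ii_self inner_scaleC_ii
        inner_commute[of "scaleC \<i> x" x] power2_eq_square algebra_simps)
  then show "(norm (scaleC c x))\<^sup>2 = (cmod c * norm x)\<^sup>2"
    by (simp add: power_mult_distrib cmod_power2)
qed simp_all

lemma cinner_norm: "cmod (cinner x y) \<le> norm x * norm (y::'a::complex_hilbert)"
proof (cases "cinner x y = 0")
  case False
  define a where "a = cinner x y / cmod (cinner x y)"
  have "cmod a = 1" using False by (simp add: a_def norm_divide)
  have "cnj (cinner x y) * cinner x y = complex_of_real ((cmod (cinner x y))\<^sup>2)"
    by (metis complex_norm_square mult.commute)
  then have "cinner x (scaleC a y) = cmod (cinner x y)"
    using False by (simp add: a_def cinner_scaleC_right power2_eq_square)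
  then have "cmod (cinner x y) = x \<bullet> scaleC a y"
    by (metis cinner_Re Re_complex_of_real)
  also have "\<dots> \<le> norm x * norm y"
    using norm_cauchy_schwarz[of x "scaleC a y"] \<open>cmod a = 1\<close> by (simp add: norm_scaleC)
  finally show ?thesis .
qed simp

lemma csubspace_imp_subspace: "cs.subspace S \<Longrightarrow> subspace (S::'a::complex_hilbert set)"
  unfolding subspace_def cs.subspace_def by (metis scaleC_of_real)

lemma cspan_eq_span_ii: "cs.span X = span (X \<union> scaleC \<i> ` (X::'a::complex_hilbert set))"
  (is "_ = span ?S")
proof
  have ii_base: "scaleC \<i> x \<in> span ?S" if "x \<in> ?S" for x
  proof -
    from that consider "x \<in> X" | y where "y \<in> X" "x = scaleC \<i> y" by auto
    then show ?thesis
    proof cases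
      case 1
      then show ?thesis by (intro span_base) simp
    next
      case 2
      then have "y \<in> span ?S" by (intro span_base) simp
      with 2 show ?thesis by (simp add: scaleC_ii_ii span_neg)
    qed
  qed
  have ii_span: "scaleC \<i> x \<in> span ?S" if "x \<in> span ?S" for x
    using that
  proof (induction rule: span_induct)
    case base
    show ?case
      by (auto simp: subspace_def span_zero cs.scale_right_distrib scaleC_scaleR
          intro: span_add span_scale)
  qed (rule ii_base)
  have "cs.subspace (span ?S)"
    unfolding cs.subspace_def
  proof (intro conjI ballI allI)
    fix c x assume "x \<in> span ?S"
    then show "scaleC c x \<in> span ?S"
      unfolding scaleC_decomp[of c x] by (intro span_add span_scale ii_span)
  qed (simp_all add: span_zero span_add)
  then show "cs.span X \<subseteq> span ?S"
    by (rule cs.span_minimal[rotated]) (auto intro: span_base)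
  show "span ?S \<subseteq> cs.span X"
    by (rule span_minimal)
      (auto intro: csubspace_imp_subspace cs.subspace_span cs.span_base cs.span_scale)
qed

lemma cspan_scaleR: "x \<in> cs.span S \<Longrightarrow> r *\<^sub>R x \<in> cs.span (S::'a::complex_hilbert set)"
  by (metis cs.span_scale scaleC_of_real)

lemma corth_comp_eq_orthogonal_comp:
  assumes "cs.subspace (H::'a::complex_hilbert set)"
  shows "corth_comp H = orthogonal_comp H"
proof -
  have "y \<bullet> scaleC \<i> x = 0" if "y \<in> H" "x \<in> orthogonal_comp H" for x y
  proof -
    have "scaleC \<i> y \<in> H" using assms \<open>y \<in> H\<close> by (rule cs.subspace_scale)
    with that show ?thesis
      using inner_ii_left[of y x] by (simp add: orthogonal_comp_def orthogonal_def)
  qed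
  then show ?thesis
    by (auto simp: corth_comp_def orthogonal_comp_def orthogonal_def cinner_eq_0_iff)
qed

lemma cspan_gram_schmidt_step:
  fixes E :: "'a::complex_hilbert set"
  assumes "finite E" and "b \<notin> cs.span E"
  obtains u where "cinner u u = 1" and "\<And>x. x \<in> E \<Longrightarrow> cinner x u = 0"
    and "cs.span (insert u E) = cs.span (insert b E)"
proof -
  obtain h k where b: "b = h + k" and h: "h \<in> cs.span E" and k: "k \<in> corth_comp (cs.span E)"
    using span_orthogonal_decomposition[of "E \<union> scaleC \<i> ` E" b] \<open>finite E\<close>
    unfolding cspan_eq_span_ii[symmetric] corth_comp_eq_orthogonal_comp[OF cs.subspace_span]
    by auto
  have "k \<noteq> 0" using assms(2) b h by auto
  define u where "u = k /\<^sub>R norm k"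
  show thesis
  proof (rule that)
    show "cinner u u = 1" using \<open>k \<noteq> 0\<close> by (simp add: u_def cinner_self)
    show "cinner x u = 0" if "x \<in> E" for x
      using k that by (auto simp: corth_comp_def u_def cinner_scaleR_right intro: cs.span_base)
    have "u \<in> cs.span (insert k E)"
      unfolding u_def by (intro cspan_scaleR cs.span_base) simp
    moreover have "k = norm k *\<^sub>R u" using \<open>k \<noteq> 0\<close> by (simp add: u_def)
    then have "k \<in> cs.span (insert u E)"
      by (metis cspan_scaleR cs.span_base insertI1)
    ultimately have "cs.span (insert u E) = cs.span (insert k E)"
      unfolding cs.span_eq by (auto intro: cs.span_base)
    also have "\<dots> = cs.span (insert b E)"
      using h b by (intro cs.eq_span_insert_eq) (simp add: cs.span_neg)
    finally show "cs.span (insert u E) = cs.span (insert b E)" .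
  qed
qed

lemma corthonormal_basis_of_independent:
  fixes B :: "'a::complex_hilbert set"
  assumes "finite B" and "cs.independent B"
  obtains e where "\<And>i j. i < card B \<Longrightarrow> j < card B \<Longrightarrow> cinner (e i) (e j) = (if i = j then 1 else 0)"
    and "cs.span (e ` {..<card B}) = cs.span B"
proof -
  have "\<exists>e. (\<forall>i<card B. \<forall>j<card B. cinner (e i) (e j) = (if i = j then 1 else 0))
    \<and> cs.span (e ` {..<card B}) = cs.span B"
    using assms
  proof (induction B rule: finite_induct)
    case (insert b B)
    then have "cs.independent B" "b \<notin> cs.span B" by (simp_all add: cs.independent_insert)
    then obtain e where orth: "\<forall>i<card B. \<forall>j<card B. cinner (e i) (e j) = (if i = j then 1 else 0)"
      and span_e: "cs.span (e ` {..<card B}) = cs.span B"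
      using insert.IH by blast
    obtain u where "cinner u u = 1" and u_orth: "\<And>x. x \<in> e ` {..<card B} \<Longrightarrow> cinner x u = 0"
      and span_u: "cs.span (insert u (e ` {..<card B})) = cs.span (insert b (e ` {..<card B}))"
      using cspan_gram_schmidt_step[of "e ` {..<card B}" b] \<open>b \<notin> cs.span B\<close> span_e by auto
    define e' where "e' = e(card B := u)"
    have "cinner (e j) u = 0" "cinner u (e j) = 0" if "j < card B" for j
      using u_orth[of "e j"] that by (simp, subst cinner_commute, simp)
    then have "\<forall>i<Suc (card B). \<forall>j<Suc (card B). cinner (e' i) (e' j) = (if i = j then 1 else 0)"
      using orth \<open>cinner u u = 1\<close> by (auto simp: e'_def less_Suc_eq)
    moreover have "e' ` {..<Suc (card B)} = insert u (e ` {..<card B})"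
      by (auto simp: e'_def lessThan_Suc)
    then have "cs.span (e' ` {..<Suc (card B)}) = cs.span (insert b B)"
      using span_u by (simp add: cs.span_insert span_e)
    ultimately show ?case
      using insert.hyps by (intro exI[of _ e']) simp
  qed simp
  then show ?thesis using that by blast
qed

section \<open>Complex-linear operators and the complex dual\<close>

lemma cscaleL_apply [simp]: "blinfun_apply (cscaleL c A) x = scaleC c (A x)"
  unfolding cscaleL_def
  by (simp add: bounded_linear_Blinfun_apply
      bounded_linear_compose[OF bounded_linear_scaleC blinfun.bounded_linear_right])

lemma cscaleL_of_real: "cscaleL (complex_of_real r) A = r *\<^sub>R A"
  by (rule blinfun_eqI) (simp add: scaleC_of_real blinfun.scaleR_left)

lemma clinear_op_zero: "clinear_op 0"
  and clinear_op_add: "clinear_op A \<Longrightarrow> clinear_op B \<Longrightarrow> clinear_op (A + B)"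
  and clinear_op_diff: "clinear_op A \<Longrightarrow> clinear_op B \<Longrightarrow> clinear_op (A - B)"
  and clinear_op_scaleR: "clinear_op A \<Longrightarrow> clinear_op (r *\<^sub>R A)"
  and clinear_op_cscaleL: "clinear_op A \<Longrightarrow> clinear_op (cscaleL c A)"
  by (simp_all add: clinear_op_def blinfun.add_left blinfun.diff_left blinfun.scaleR_left
      cs.scale_right_distrib cs.scale_right_diff_distrib scaleC_scaleR scaleC_scaleC mult.commute)

lemma clinear_op_sum: "(\<And>p. p \<in> S \<Longrightarrow> clinear_op (X p)) \<Longrightarrow> clinear_op (\<Sum>p\<in>S. X p)"
  by (induction S rule: infinite_finite_induct) (simp_all add: clinear_op_zero clinear_op_add)

context
  fixes f :: "('a::complex_hilbert \<Rightarrow>\<^sub>L 'b::complex_hilbert) \<Rightarrow> complex"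
  assumes f: "f \<in> cdual"
begin

lemma cdual_add: "clinear_op A \<Longrightarrow> clinear_op B \<Longrightarrow> f (A + B) = f A + f B"
  and cdual_cscaleL: "clinear_op A \<Longrightarrow> f (cscaleL c A) = c * f A"
  and cdual_nonlinear: "\<not> clinear_op A \<Longrightarrow> f A = 0"
  using f by (simp_all add: cdual_def)

lemma cdual_scaleR: "clinear_op A \<Longrightarrow> f (r *\<^sub>R A) = complex_of_real r * f A"
  using cdual_cscaleL[of A "complex_of_real r"] by (simp add: cscaleL_of_real)

lemma cdual_zero: "f 0 = 0"
  using cdual_scaleR[OF clinear_op_zero, of 0] by simp

lemma cdual_diff: "clinear_op A \<Longrightarrow> clinear_op B \<Longrightarrow> f (A - B) = f A - f B"
  using cdual_add[of B "A - B"] clinear_op_diff[of A B] by simp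

lemma cdual_sum:
  "(\<And>p. p \<in> S \<Longrightarrow> clinear_op (X p)) \<Longrightarrow> f (\<Sum>p\<in>S. X p) = (\<Sum>p\<in>S. f (X p))"
  by (induction S rule: infinite_finite_induct) (simp_all add: cdual_zero cdual_add clinear_op_sum)

lemma cdual_bound:
  assumes "clinear_op A"
  shows "cmod (f A) \<le> cdual_norm f * norm A"
proof (cases "A = 0")
  case False
  obtain K where K: "\<And>B. clinear_op B \<Longrightarrow> cmod (f B) \<le> K * norm B"
    using f by (auto simp: cdual_def)
  have "cmod (f B) \<le> \<bar>K\<bar>" if "clinear_op B" "norm B \<le> 1" for B
  proof -
    have "cmod (f B) \<le> \<bar>K\<bar> * norm B"
      using K[OF \<open>clinear_op B\<close>] by (meson abs_ge_self mult_right_mono norm_ge_zero order_trans)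
    also have "\<dots> \<le> \<bar>K\<bar>" using \<open>norm B \<le> 1\<close> by (simp add: mult_left_le)
    finally show ?thesis .
  qed
  then have bdd: "bdd_above {cmod (f B) | B. clinear_op B \<and> norm B \<le> 1}"
    by (intro bdd_aboveI[of _ "\<bar>K\<bar>"]) blast
  have "cmod (f (A /\<^sub>R norm A)) \<le> cdual_norm f"
    unfolding cdual_norm_def using False \<open>clinear_op A\<close>
    by (intro cSup_upper[OF _ bdd]) (auto intro!: clinear_op_scaleR)
  then show ?thesis
    using False \<open>clinear_op A\<close> by (simp add: cdual_scaleR norm_divide field_simps)
qed (simp add: cdual_zero)

end

lemma csupp_funcs_Re_vanish_if_quadratic_bound:
  assumes f: "f \<in> csupp_funcs T" and "clinear_op T" "clinear_op Y"
    and bound: "\<And>t. norm (T + t *\<^sub>R Y) \<le> 1 + D * t\<^sup>2"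
  shows "Re (f Y) = 0"
proof (rule linear_le_quadratic_imp_zero)
  fix t
  have fd: "f \<in> cdual" and "cdual_norm f = 1" "f T = 1" using f by (simp_all add: csupp_funcs_def)
  have lin: "clinear_op (T + t *\<^sub>R Y)" using assms by (intro clinear_op_add clinear_op_scaleR)
  have "1 + t * Re (f Y) = Re (f (T + t *\<^sub>R Y))"
    using \<open>f T = 1\<close> assms by (simp add: cdual_add[OF fd] cdual_scaleR[OF fd] clinear_op_scaleR)
  also have "\<dots> \<le> cdual_norm f * norm (T + t *\<^sub>R Y)"
    using complex_Re_le_cmod cdual_bound[OF fd lin] by (rule order_trans)
  also have "\<dots> \<le> 1 + D * t\<^sup>2" using \<open>cdual_norm f = 1\<close> bound by simp
  finally show "t * Re (f Y) \<le> D * t\<^sup>2" by simp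
qed

section \<open>Smoothness in the complex case\<close>

text \<open>Like the elements of \<open>cdual\<close>, \<open>cinner_eval w v\<close> is \<open>0\<close> off the complex-linear operators.\<close>

definition cinner_eval ::
    "'b::complex_hilbert \<Rightarrow> 'a::complex_hilbert \<Rightarrow> ('a \<Rightarrow>\<^sub>L 'b) \<Rightarrow> complex"
  where "cinner_eval w v A = (if clinear_op A then cinner (A v) w else 0)"

lemma cinner_eval_cdual: "cinner_eval (w::'b::complex_hilbert) (v::'a::complex_hilbert) \<in> cdual"
proof -
  have "cmod (cinner_eval w v A) \<le> (norm v * norm w) * norm A" if "clinear_op A"
    for A :: "'a \<Rightarrow>\<^sub>L 'b"
  proof -
    have "cmod (cinner_eval w v A) \<le> norm (A v) * norm w"
      using that by (simp add: cinner_eval_def cinner_norm)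
    also have "\<dots> \<le> norm A * norm v * norm w"
      by (intro mult_right_mono norm_blinfun) simp
    finally show ?thesis by (simp add: ac_simps)
  qed
  then show ?thesis
    by (auto simp: cdual_def cinner_eval_def clinear_op_add clinear_op_cscaleL blinfun.add_left
        cinner_add_left cinner_scaleC_left)
qed

definition crank_one :: "'b::complex_hilbert \<Rightarrow> 'a::complex_hilbert \<Rightarrow> 'a \<Rightarrow>\<^sub>L 'b"
  where "crank_one w v = Blinfun (\<lambda>z. (z \<bullet> v) *\<^sub>R w + (z \<bullet> scaleC \<i> v) *\<^sub>R scaleC \<i> w)"

lemma crank_one_apply [simp]: "crank_one w v z = scaleC (cinner z v) w"
proof -
  have "bounded_linear (\<lambda>z. (z \<bullet> v) *\<^sub>R w + (z \<bullet> scaleC \<i> v) *\<^sub>R scaleC \<i> w)"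
    by (intro bounded_linear_add
        bounded_linear_compose[OF bounded_linear_scaleR_left bounded_linear_inner_left])
  then show ?thesis
    by (simp add: crank_one_def bounded_linear_Blinfun_apply scaleC_decomp[of "cinner z v"])
qed

lemma clinear_op_crank_one: "clinear_op (crank_one w v)"
  by (simp add: clinear_op_def cinner_scaleC_left scaleC_scaleC)

lemma cinner_eval_in_span_csupp_funcs:
  fixes T :: "'a::complex_hilbert \<Rightarrow>\<^sub>L 'b::complex_hilbert"
  assumes "clinear_op T" "norm T = 1" and Tu: "norm (T u) = norm u"
  shows "cinner_eval (T u) u \<in> fs.span (csupp_funcs T)"
proof (cases "u = 0")
  case True
  then have "cinner_eval (T u) u = 0" by (simp add: cinner_eval_def fun_eq_iff)
  then show ?thesis by (simp add: fs.span_zero)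
next
  case False
  define w where "w = u /\<^sub>R norm u"
  have "norm w = 1" "norm (T w) = 1"
    using False Tu by (simp_all add: w_def blinfun.scaleR_right)
  have "cdual_norm (cinner_eval (T w) w) = 1"
    unfolding cdual_norm_def
  proof (rule cSup_eq_maximum)
    show "1 \<in> {cmod (cinner_eval (T w) w A) | A. clinear_op A \<and> norm A \<le> 1}"
      using assms \<open>norm (T w) = 1\<close> by (auto simp: cinner_eval_def cinner_self intro!: exI[of _ T])
  next
    fix x assume "x \<in> {cmod (cinner_eval (T w) w A) | A. clinear_op A \<and> norm A \<le> 1}"
    then obtain A :: "'a \<Rightarrow>\<^sub>L 'b" where A: "x = cmod (cinner (A w) (T w))" "norm A \<le> 1"
      by (auto simp: cinner_eval_def)
    have "x \<le> norm (A w) * norm (T w)" unfolding A by (rule cinner_norm)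
    also have "\<dots> \<le> norm A * norm w" using \<open>norm (T w) = 1\<close> by (simp add: norm_blinfun)
    finally show "x \<le> 1" using A(2) \<open>norm w = 1\<close> by simp
  qed
  then have "cinner_eval (T w) w \<in> csupp_funcs T"
    using assms \<open>norm (T w) = 1\<close>
    by (simp add: csupp_funcs_def cinner_eval_cdual cinner_eval_def cinner_self)
  moreover have "cinner_eval (T u) u = fscale ((norm u)\<^sup>2) (cinner_eval (T w) w)"
    using False
    by (simp add: fun_eq_iff cinner_eval_def w_def blinfun.scaleR_right cinner_scaleR_left
        cinner_scaleR_right power2_eq_square field_simps)
  ultimately show ?thesis by (simp add: fs.span_base fs.span_scale)
qed

lemma cinner_eval_polarization:
  assumes "clinear_op T"
  shows "cinner_eval (T y) x = fscale (1 / 4)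
    (cinner_eval (T (x + y)) (x + y) - cinner_eval (T (x - y)) (x - y)
     + fscale \<i> (cinner_eval (T (x + scaleC \<i> y)) (x + scaleC \<i> y))
     - fscale \<i> (cinner_eval (T (x - scaleC \<i> y)) (x - scaleC \<i> y)))"
proof
  fix A
  show "cinner_eval (T y) x A = fscale (1 / 4)
    (cinner_eval (T (x + y)) (x + y) - cinner_eval (T (x - y)) (x - y)
     + fscale \<i> (cinner_eval (T (x + scaleC \<i> y)) (x + scaleC \<i> y))
     - fscale \<i> (cinner_eval (T (x - scaleC \<i> y)) (x - scaleC \<i> y))) A"
  proof (cases "clinear_op A")
    case True
    then have "A (scaleC \<i> y) = scaleC \<i> (A y)" "T (scaleC \<i> y) = scaleC \<i> (T y)"
      using assms by (simp_all add: clinear_op_def)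
    with True show ?thesis
      by (simp add: cinner_eval_def blinfun.add_right blinfun.diff_right cinner_add_left
          cinner_add_right cinner_diff_left cinner_diff_right cinner_ii_left cinner_ii_right
          algebra_simps)
  qed (simp add: cinner_eval_def)
qed

lemma cinner_vanish_on_cspan:
  fixes A B :: "'a::complex_hilbert \<Rightarrow>\<^sub>L 'b::complex_hilbert"
  assumes "clinear_op A" "clinear_op B" and basis: "\<And>x y. x \<in> X \<Longrightarrow> y \<in> X \<Longrightarrow> cinner (A x) (B y) = 0"
    and "u \<in> cs.span X" "v \<in> cs.span X"
  shows "cinner (A u) (B v) = 0"
proof -
  have u_basis: "\<forall>y\<in>X. cinner (A u) (B y) = 0"
    using \<open>u \<in> cs.span X\<close>
  proof (induction rule: cs.span_induct)
    case base
    show ?case using \<open>clinear_op A\<close>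
      by (auto simp: cs.subspace_def clinear_op_def blinfun.add_right cinner_add_left
          cinner_scaleC_left)
  qed (use basis in blast)
  show ?thesis
    using \<open>v \<in> cs.span X\<close>
  proof (induction rule: cs.span_induct)
    case base
    show ?case using \<open>clinear_op B\<close>
      by (auto simp: cs.subspace_def clinear_op_def blinfun.add_right cinner_add_right
          cinner_scaleC_right)
  qed (use u_basis in blast)
qed

lemma sum_fun_apply: "(\<Sum>x\<in>S. g x) a = (\<Sum>x\<in>S. g x a)"
  by (induction S rule: infinite_finite_induct) auto

context
  fixes T :: "'a::complex_hilbert \<Rightarrow>\<^sub>L 'b::complex_hilbert" and e :: "nat \<Rightarrow> 'a" and n :: nat
  assumes clinear_T: "clinear_op T" and norm_T: "norm T = 1"
    and corthonormal: "\<And>i j. i < n \<Longrightarrow> j < n \<Longrightarrow> cinner (e i) (e j) = (if i = j then 1 else 0)"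
    and attain: "norm_attain_set T = {x \<in> cs.span (e ` {..<n}). norm x = 1}"
    and restr: "restr_norm (blinfun_apply T) (corth_comp (cs.span (e ` {..<n}))) < 1"
begin

abbreviation index_square :: "(nat \<times> nat) set"
  where "index_square \<equiv> {..<n} \<times> {..<n}"

abbreviation entry_functional :: "nat \<times> nat \<Rightarrow> ('a \<Rightarrow>\<^sub>L 'b) \<Rightarrow> complex"
  where "entry_functional p \<equiv> cinner_eval (T (e (fst p))) (e (snd p))"

abbreviation dual_crank_one :: "nat \<times> nat \<Rightarrow> 'a \<Rightarrow>\<^sub>L 'b"
  where "dual_crank_one p \<equiv> crank_one (T (e (fst p))) (e (snd p))"

lemma norm_preserving_on_cspan_basis:
  "h \<in> cs.span (e ` {..<n}) \<Longrightarrow> norm (T h) = norm h"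
  using norm_T attain csubspace_imp_subspace[OF cs.subspace_span]
  by (rule norm_preserving_if_norm_attain_set_sphere)

lemma cinner_preserving_on_cspan_basis:
  assumes "u \<in> cs.span (e ` {..<n})" "v \<in> cs.span (e ` {..<n})"
  shows "cinner (T u) (T v) = cinner u v"
proof -
  have ip: "T x \<bullet> T y = x \<bullet> y" if "x \<in> cs.span (e ` {..<n})" "y \<in> cs.span (e ` {..<n})" for x y
    using csubspace_imp_subspace[OF cs.subspace_span] norm_preserving_on_cspan_basis that
    by (rule inner_preserving_if_norm_preserving)
  have "scaleC \<i> v \<in> cs.span (e ` {..<n})" using assms(2) by (rule cs.span_scale)
  moreover have "T (scaleC \<i> v) = scaleC \<i> (T v)" using clinear_T by (simp add: clinear_op_def)
  ultimately have "T u \<bullet> scaleC \<i> (T v) = u \<bullet> scaleC \<i> v"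
    using ip[OF assms(1)] by metis
  with ip[OF assms] show ?thesis by (simp add: cinner_def)
qed

lemma norm_perturbation_le_quadratic_cspan:
  fixes Y :: "'a \<Rightarrow>\<^sub>L 'b"
  assumes "\<And>h. h \<in> cs.span (e ` {..<n}) \<Longrightarrow> T h \<bullet> Y h = 0"
  obtains D where "\<And>t. norm (T + t *\<^sub>R Y) \<le> 1 + D * t\<^sup>2"
proof -
  let ?B = "e ` {..<n} \<union> scaleC \<i> ` e ` {..<n}"
  have "norm_attain_set T = {x \<in> span ?B. norm x = 1}"
    using attain unfolding cspan_eq_span_ii .
  moreover have "restr_norm (blinfun_apply T) (orthogonal_comp (span ?B)) < 1"
    using restr unfolding corth_comp_eq_orthogonal_comp[OF cs.subspace_span]
    unfolding cspan_eq_span_ii .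
  moreover have "\<And>h. h \<in> span ?B \<Longrightarrow> T h \<bullet> Y h = 0"
    using assms unfolding cspan_eq_span_ii .
  ultimately show thesis
    using norm_perturbation_le_quadratic[of ?B T Y] norm_T that by blast
qed

lemma entry_functional_biorthogonal:
  assumes "p \<in> index_square" "q \<in> index_square"
  shows "entry_functional q (dual_crank_one p) = (if p = q then 1 else 0)"
  using assms
  by (auto simp: cinner_eval_def clinear_op_crank_one cinner_scaleC_left corthonormal
      cinner_preserving_on_cspan_basis cs.span_base split: prod.splits if_splits)

lemma entry_functional_in_span_csupp_funcs:
  assumes "p \<in> index_square"
  shows "entry_functional p \<in> fs.span (csupp_funcs T)"
proof -
  have psi: "cinner_eval (T x) x \<in> fs.span (csupp_funcs T)" if "x \<in> cs.span (e ` {..<n})" for x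
    using clinear_T norm_T norm_preserving_on_cspan_basis[OF that]
    by (rule cinner_eval_in_span_csupp_funcs)
  define x where "x = e (snd p)"
  define y where "y = e (fst p)"
  have "x \<in> cs.span (e ` {..<n})" "y \<in> cs.span (e ` {..<n})"
    using assms by (auto simp: x_def y_def intro: cs.span_base)
  moreover from this have "scaleC \<i> y \<in> cs.span (e ` {..<n})" by (intro cs.span_scale)
  ultimately have "x + y \<in> cs.span (e ` {..<n})" "x - y \<in> cs.span (e ` {..<n})"
    "x + scaleC \<i> y \<in> cs.span (e ` {..<n})" "x - scaleC \<i> y \<in> cs.span (e ` {..<n})"
    by (simp_all add: cs.span_add cs.span_diff)
  then show ?thesis
    unfolding x_def[symmetric] y_def[symmetric]
      cinner_eval_polarization[OF clinear_T, where x = x and y = y]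
    by (intro fs.span_scale fs.span_add fs.span_diff psi)
qed

lemma csupp_funcs_vanish_on_common_kernel:
  assumes f: "f \<in> csupp_funcs T" and "clinear_op Y"
    and Y: "\<And>q. q \<in> index_square \<Longrightarrow> entry_functional q Y = 0"
  shows "f Y = 0"
proof -
  have "cinner (Y u) (T v) = 0" if "u \<in> cs.span (e ` {..<n})" "v \<in> cs.span (e ` {..<n})" for u v
    using \<open>clinear_op Y\<close> clinear_T _ that
  proof (rule cinner_vanish_on_cspan)
    fix x y assume "x \<in> e ` {..<n}" "y \<in> e ` {..<n}"
    then show "cinner (Y x) (T y) = 0"
      using Y \<open>clinear_op Y\<close> by (auto simp: cinner_eval_def)
  qed
  then have "T h \<bullet> Y h = 0" "T h \<bullet> cscaleL \<i> Y h = 0" if "h \<in> cs.span (e ` {..<n})" for h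
    using that inner_ii_left[of "Y h" "T h"]
    by (auto simp: cinner_eq_0_iff inner_commute[of "T h"])
  \<comment> \<open>The real part of \<open>f (i Y)\<close> is minus the imaginary part of \<open>f Y\<close>.\<close>
  then obtain D D' where "\<And>t. norm (T + t *\<^sub>R Y) \<le> 1 + D * t\<^sup>2"
    and "\<And>t. norm (T + t *\<^sub>R cscaleL \<i> Y) \<le> 1 + D' * t\<^sup>2"
    using norm_perturbation_le_quadratic_cspan by metis
  then have "Re (f Y) = 0" "Re (f (cscaleL \<i> Y)) = 0"
    using f clinear_T \<open>clinear_op Y\<close>
    by (auto intro: csupp_funcs_Re_vanish_if_quadratic_bound clinear_op_cscaleL)
  moreover have "f (cscaleL \<i> Y) = \<i> * f Y"
    using f \<open>clinear_op Y\<close> by (simp add: csupp_funcs_def cdual_cscaleL)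
  ultimately show ?thesis by (simp add: complex_eq_iff)
qed

lemma csupp_funcs_in_span_entry_functional:
  assumes f: "f \<in> csupp_funcs T"
  shows "f \<in> fs.span (entry_functional ` index_square)"
proof -
  have "f \<in> cdual" using f by (simp add: csupp_funcs_def)
  have expansion: "f A = (\<Sum>p\<in>index_square. f (dual_crank_one p) * entry_functional p A)" for A
  proof (cases "clinear_op A")
    case True
    define Y where "Y = A - (\<Sum>p\<in>index_square. cscaleL (entry_functional p A) (dual_crank_one p))"
    have sum: "clinear_op (\<Sum>p\<in>index_square. cscaleL (entry_functional p A) (dual_crank_one p))"
      by (intro clinear_op_sum clinear_op_cscaleL clinear_op_crank_one)
    then have "clinear_op Y" using True by (simp add: Y_def clinear_op_diff)
    have eval: "g Y = g A - (\<Sum>p\<in>index_square. entry_functional p A * g (dual_crank_one p))"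
      if "g \<in> cdual" for g
      using True sum that
      by (simp add: Y_def cdual_diff cdual_sum cdual_cscaleL clinear_op_cscaleL
          clinear_op_crank_one)
    have "entry_functional q Y = 0" if "q \<in> index_square" for q
    proof -
      have "(\<Sum>p\<in>index_square. entry_functional p A * entry_functional q (dual_crank_one p))
          = (\<Sum>p\<in>index_square. if p = q then entry_functional p A else 0)"
        using that entry_functional_biorthogonal by (intro sum.cong) auto
      with that show ?thesis by (simp add: eval[OF cinner_eval_cdual])
    qed
    then have "f Y = 0"
      by (rule csupp_funcs_vanish_on_common_kernel[OF f \<open>clinear_op Y\<close>])
    then show ?thesis using eval[OF \<open>f \<in> cdual\<close>] by (simp add: mult.commute)
  next
    case False
    then show ?thesis using cdual_nonlinear[OF \<open>f \<in> cdual\<close> False] by (simp add: cinner_eval_def)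
  qed
  have "f = (\<Sum>p\<in>index_square. fscale (f (dual_crank_one p)) (entry_functional p))"
  proof
    show "f A = (\<Sum>p\<in>index_square. fscale (f (dual_crank_one p)) (entry_functional p)) A" for A
      using expansion[of A] by (simp add: sum_fun_apply)
  qed
  also have "\<dots> \<in> fs.span (entry_functional ` index_square)"
    by (intro fs.span_sum fs.span_scale fs.span_base imageI)
  finally show ?thesis .
qed

lemma ck_smooth_norm_attain_sphere: "ck_smooth T (n\<^sup>2)"
proof -
  have lin: "Vector_Spaces.linear fscale (*) (\<lambda>\<phi>. \<phi> A)" for A :: "'a \<Rightarrow>\<^sub>L 'b"
    by (auto simp: Vector_Spaces.linear_def module_hom_iff module_iff_vector_space
        vector_space_over_itself.vector_space_axioms fs.vector_space_axioms)
  have "finite index_square" by simp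
  from fs.biorthogonal_imp_independent[of index_square "\<lambda>p \<phi>. \<phi> (dual_crank_one p)",
      OF this lin entry_functional_biorthogonal]
  have inj: "inj_on entry_functional index_square"
    and indep: "\<not> fs.dependent (entry_functional ` index_square)"
    by blast+
  have "fs.span (entry_functional ` index_square) = fs.span (csupp_funcs T)"
    unfolding fs.span_eq
    using entry_functional_in_span_csupp_funcs csupp_funcs_in_span_entry_functional by blast
  then show ?thesis
    unfolding ck_smooth_def
    using clinear_T norm_T indep card_image[OF inj]
    by (intro conjI exI[of _ "entry_functional ` index_square"]) (simp_all add: power2_eq_square)
qed

end

theorem theorem2p1:
  shows
  "(\<forall>(T :: 'a::complex_hilbert \<Rightarrow>\<^sub>L 'b::complex_hilbert) (H0 :: 'a set) (n :: nat).
      clinear_op T \<and> norm T = 1 \<and>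
      module.subspace scaleC H0 \<and>
      (\<exists>B. finite B \<and> \<not> module.dependent scaleC B \<and> module.span scaleC B = H0 \<and> card B = n) \<and>
      norm_attain_set T = {x \<in> H0. norm x = 1} \<and>
      restr_norm (blinfun_apply T) (corth_comp H0) < 1
      \<longrightarrow> ck_smooth T (n ^ 2))
   \<and>
   (\<forall>(T :: 'c::{real_inner, complete_space} \<Rightarrow>\<^sub>L 'd::{real_inner, complete_space})
       (H0 :: 'c set) (n :: nat).
      norm T = 1 \<and>
      subspace H0 \<and>
      (\<exists>B. finite B \<and> independent B \<and> span B = H0 \<and> card B = n) \<and>
      norm_attain_set T = {x \<in> H0. norm x = 1} \<and>
      restr_norm (blinfun_apply T) (orthogonal_comp H0) < 1
      \<longrightarrow> k_smooth T ((n + 1) choose 2))"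
proof (intro conjI allI impI, goal_cases)
  case (1 T H0 n)
  then obtain B where B: "finite B" "cs.independent B" "cs.span B = H0" "card B = n"
    by blast
  obtain e where "\<And>i j. i < n \<Longrightarrow> j < n \<Longrightarrow> cinner (e i) (e j) = (if i = j then 1 else 0)"
    and "cs.span (e ` {..<n}) = H0"
    using corthonormal_basis_of_independent[OF B(1,2)] B(3,4) by metis
  with 1 show ?case by (intro ck_smooth_norm_attain_sphere) auto
next
  case (2 T H0 n)
  then obtain B where B: "finite B" "independent B" "span B = H0" "card B = n"
    by blast
  obtain e where "\<And>i j. i < n \<Longrightarrow> j < n \<Longrightarrow> e i \<bullet> e j = (if i = j then 1 else 0)"
    and "span (e ` {..<n}) = H0"
    using orthonormal_basis_of_independent[OF B(1,2)] B(3,4) by metis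
  with 2 show ?case by (intro k_smooth_norm_attain_sphere) auto
qed

end
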